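(* Let $J:=\operatorname{conv}\{\mathbf{v}_0,\mathbf{v}_1,\dots,\mathbf{v}_d\}\subset\mathbb{R}^d_{\ge 0}\setminus\{\mathbf{0}\}$ be a $d$-simplex and let $f$ be continuous and convex on $J$. Then $$\operatorname{vol}(P(f,J))=\frac{1}{(d+2)!}\left|\det\begin{bmatrix}\mathbf{v}_0&\mathbf{v}_1&\dots&\mathbf{v}_d\\ 1&1&\dots&1\end{bmatrix}\right|\sum_{j=0}^d f(\mathbf{v}_j)-\frac{1}{d+2}\int_J f(\mathbf{x})\,d\mathbf{x}.$$
   Context: Let $\mu:\mathbb{R}^d\to\mathbb{R}$ be the unique affine function agreeing with $f$ at the vertices $\mathbf{v}_0,\dots,\mathbf{v}_d$ of $J$, and let $\mu(\mathbf{x},z):=z\,\mu(\mathbf{x}/z)$ (which extends to a linear function of $(\mathbf{x},z)$). For $z\ge 0$, $z\cdot J:=\{z\mathbf{x}:\mathbf{x}\in J\}$. The perspective relaxation is $$P(f,J):=\operatorname{cl}\{(\mathbf{x},y,z)\in\mathbb{R}^d\times\mathbb{R}\times\mathbb{R}:\ \mu(\mathbf{x},z)\ge y\ge z f(\mathbf{x}/z),\ \mathbf{x}\in z\cdot J,\ 1\ge z>0\}.$$ $\operatorname{vol}$ denotes $(d+2)$-dimensional Lebesgue measure. *)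

theory Defs
  imports "HOL-Analysis.Analysis"
begin

text \<open>The unique affine function agreeing with f at the vertices v j
  (j ranging over the d+1 indices of type 'n option).\<close>
definition affine_interp ::
  "('n::finite option \<Rightarrow> real^'n) \<Rightarrow> (real^'n \<Rightarrow> real) \<Rightarrow> real^'n \<Rightarrow> real" where
  "affine_interp v f = (THE g. (\<exists>a b. g = (\<lambda>x. a \<bullet> x + b)) \<and> (\<forall>j. g (v j) = f (v j)))"

definition persp_relax ::
  "('n::finite option \<Rightarrow> real^'n) \<Rightarrow> (real^'n \<Rightarrow> real) \<Rightarrow> ((real^'n) \<times> real \<times> real) set" where
  "persp_relax v f = closure {(x, y, z). 0 < z \<and> z \<le> 1 \<and>
      x \<in> (\<lambda>p. z *\<^sub>R p) ` (convex hull (range v)) \<and>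
      z * f ((1 / z) *\<^sub>R x) \<le> y \<and> y \<le> z * affine_interp v f ((1 / z) *\<^sub>R x)}"

definition vertex_matrix :: "('n::finite option \<Rightarrow> real^'n) \<Rightarrow> real^('n option)^('n option)" where
  "vertex_matrix v = (\<chi> i j. case i of None \<Rightarrow> 1 | Some k \<Rightarrow> v j $ k)"

end

theory Submission
  imports Defs
begin

(* The slice of P(f,J) at height z in (0,1] is the region between z f(x/z) and z mu(x/z) over
   z J; its area is z^(d+1) times the integral of mu - f over J, so integrating over z gives
   vol P(f,J) = (int_J mu - int_J f) / (d+2), the closure adding only the null slice z = 0.
   Since mu interpolates f at the vertices, int_J mu = sum_j f(v_j) int_J lambda_j for the
   barycentric coordinates lambda_j; the superlevel sets of lambda_j are homothetic copies of J,
   whence int_J lambda_j = vol J / (d+1). Finally, the truncated cone over J has volume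
   vol J / (d+1) by the same slicing, and it is the image of the standard simplex of R^(d+1)
   under the vertex matrix, so vol J = |det V| / d!. *)

section \<open>Lebesgue measure of linear images\<close>

(* The library's change of variables for linear maps (Change_Of_Vars) needs a well-ordered index
   type; 'a ranked is a well-ordered copy of the finite type 'a, through which that result is
   transported to arbitrary finite index types. *)
typedef ('a::finite) ranked = "{..<CARD('a)}"
  morphisms ranked_nat Ranked
  by (rule exI[of _ 0]) simp

instantiation ranked :: (finite) linorder
begin
definition "x \<le> y \<longleftrightarrow> ranked_nat x \<le> ranked_nat y"
definition "x < y \<longleftrightarrow> ranked_nat x < ranked_nat y"
instance by standard (auto simp: less_eq_ranked_def less_ranked_def ranked_nat_inject)
end

instance ranked :: (finite) wellorder
proof
  fix P :: "'a ranked \<Rightarrow> bool" and a :: "'a ranked"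
  assume step: "\<And>x. (\<And>y. y < x \<Longrightarrow> P y) \<Longrightarrow> P x"
  show "P a"
    by (induction a rule: measure_induct_rule[of ranked_nat]) (rule step, simp add: less_ranked_def)
qed

instance ranked :: (finite) finite
  by standard (simp add: type_definition.Abs_image[OF type_definition_ranked, symmetric])

lemma card_ranked: "CARD('a::finite ranked) = CARD('a)"
  by (simp add: type_definition.card[OF type_definition_ranked])

lemma det_reindex:
  fixes A :: "'a::comm_ring_1^'n::finite^'n" and e :: "'m::finite \<Rightarrow> 'n"
  assumes e: "bij e"
  shows "det (\<chi> i j. A $ e i $ e j) = det A"
proof -
  let ?conj = "\<lambda>q. e \<circ> q \<circ> inv e"
  have sign_conj: "sign (?conj q) = sign q" if "q permutes UNIV" for q
  proof -
    have "map_permutation UNIV e q = ?conj q"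
      using e by (simp add: map_permutation_def restrict_id_def bij_is_surj comp_def)
    then show ?thesis
      using sign_map_permutation[of e UNIV q] e that by (simp add: bij_is_inj)
  qed
  have prod_conj: "(\<Prod>i\<in>UNIV. A $ i $ e (q (inv e i))) = (\<Prod>k\<in>UNIV. A $ e k $ e (q k))" for q
    using e by (subst prod.reindex_bij_betw[OF e, symmetric]) (simp add: bij_is_inj)
  have "det A = (\<Sum>q | q permutes (UNIV :: 'm set).
      of_int (sign (?conj q)) * (\<Prod>i\<in>UNIV. A $ i $ ?conj q i))"
    unfolding det_def
  proof (rule sum.reindex_bij_witness[of _ ?conj "\<lambda>p. inv e \<circ> p \<circ> e"])
    fix p :: "'n \<Rightarrow> 'n" assume "p \<in> {p. p permutes UNIV}"
    then show "?conj (inv e \<circ> p \<circ> e) = p" "inv e \<circ> p \<circ> e \<in> {q. q permutes UNIV}"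
      using e by (auto simp: fun_eq_iff bij_is_surj surj_f_inv_f
          intro!: bij_imp_permutes bij_comp bij_imp_bij_inv permutes_bij)
    then show "of_int (sign (?conj (inv e \<circ> p \<circ> e))) * (\<Prod>i\<in>UNIV. A $ i $ ?conj (inv e \<circ> p \<circ> e) i)
        = of_int (sign p) * (\<Prod>i\<in>UNIV. A $ i $ p i)"
      by simp
  next
    fix q :: "'m \<Rightarrow> 'm" assume "q \<in> {q. q permutes UNIV}"
    then show "inv e \<circ> ?conj q \<circ> e = q" "?conj q \<in> {p. p permutes UNIV}"
      using e by (auto simp: fun_eq_iff bij_is_inj
          intro!: bij_imp_permutes bij_comp bij_imp_bij_inv permutes_bij)
  qed
  also have "\<dots> = det (\<chi> i j. A $ e i $ e j)"
    unfolding det_def by (intro sum.cong refl) (simp add: sign_conj prod_conj)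
  finally show ?thesis ..
qed

lemma lborel_distr_basis_permutation:
  fixes T :: "'a::euclidean_space \<Rightarrow> 'b::euclidean_space"
  assumes lin: "linear T" and perm: "bij_betw T Basis Basis"
  shows "distr lborel borel T = lborel"
proof -
  have T_Basis: "T c \<in> Basis" if "c \<in> Basis" for c
    using bij_betwE[OF perm] that by blast
  have T_inj: "T c = T b \<longleftrightarrow> c = b" if "b \<in> Basis" "c \<in> Basis" for b c
    using inj_on_eq_iff[OF bij_betw_imp_inj_on[OF perm] that(2,1)] .
  have coord: "T x \<bullet> T b = x \<bullet> b" if b: "b \<in> Basis" for x b
  proof -
    have "T x \<bullet> T b = (\<Sum>c\<in>Basis. if c = b then x \<bullet> c else 0)"
      unfolding Linear_Algebra.linear_componentwise[OF lin, of x]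
    proof (rule sum.cong[OF refl])
      fix c :: 'a assume "c \<in> Basis"
      then show "(x \<bullet> c) * (T c \<bullet> T b) = (if c = b then x \<bullet> c else 0)"
        using b by (simp add: inner_Basis T_Basis T_inj)
    qed
    then show ?thesis using b by simp
  qed
  have ball_Basis: "(\<forall>b'\<in>Basis. P b') \<longleftrightarrow> (\<forall>b\<in>Basis. P (T b))" for P
    by (subst (1) bij_betw_imp_surj_on[OF perm, symmetric]) simp
  have [measurable]: "T \<in> borel_measurable borel"
    using lin by (intro borel_measurable_continuous_onI linear_continuous_on)
      (simp add: linear_conv_bounded_linear)
  show ?thesis
  proof (rule lborel_eqI[symmetric])
    fix l u :: 'b assume le: "\<And>b. b \<in> Basis \<Longrightarrow> l \<bullet> b \<le> u \<bullet> b"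
    define pull where "pull w = (\<Sum>b\<in>Basis. (w \<bullet> T b) *\<^sub>R b)" for w
    have pull_inner: "pull w \<bullet> b = w \<bullet> T b" if "b \<in> Basis" for w b
      using that by (simp add: pull_def inner_sum_left inner_Basis if_distrib cong: if_cong)
    have "x \<in> T -` box l u \<longleftrightarrow> x \<in> box (pull l) (pull u)" for x
      unfolding vimage_eq mem_box ball_Basis[of "\<lambda>b'. l \<bullet> b' < T x \<bullet> b' \<and> T x \<bullet> b' < u \<bullet> b'"]
      by (simp add: coord pull_inner)
    then have "T -` box l u = box (pull l) (pull u)" by blast
    then have "emeasure (distr lborel borel T) (box l u) = ennreal (\<Prod>b\<in>Basis. (pull u - pull l) \<bullet> b)"
      using le by (subst emeasure_distr) (auto simp: pull_inner T_Basis)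
    also have "(\<Prod>b\<in>Basis. (pull u - pull l) \<bullet> b) = (\<Prod>b\<in>Basis. (u - l) \<bullet> T b)"
      by (intro prod.cong) (auto simp: inner_diff_left pull_inner)
    also have "\<dots> = (\<Prod>b\<in>Basis. (u - l) \<bullet> b)"
      using prod.reindex_bij_betw[OF perm, of "\<lambda>b. (u - l) \<bullet> b"] by simp
    finally show "emeasure (distr lborel borel T) (box l u) = ennreal (\<Prod>b\<in>Basis. (u - l) \<bullet> b)" .
  qed simp
qed

lemma measure_reindex_image:
  fixes e :: "'m::finite \<Rightarrow> 'n::finite"
  assumes e: "bij e" and K: "compact K"
  shows "measure lebesgue ((\<lambda>x :: real^'n. \<chi> k. x $ e k) ` K) = measure lebesgue K"
proof -
  define P :: "real^'n \<Rightarrow> real^'m" where "P x = (\<chi> k. x $ e k)" for x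
  define Q :: "real^'m \<Rightarrow> real^'n" where "Q y = (\<chi> i. y $ inv e i)" for y
  have e_inv: "e (inv e i) = i" "inv e (e k) = k" for i k
    using e by (simp_all add: bij_is_surj surj_f_inv_f bij_is_inj)
  have QP: "Q (P x) = x" and PQ: "P (Q y) = y" for x y
    by (simp_all add: P_def Q_def vec_eq_iff e_inv)
  have lin_P: "linear P"
    by (auto simp: P_def vec_eq_iff intro!: linearI)
  have "bij_betw P Basis Basis"
  proof (rule bij_betw_byWitness[of _ Q])
    have axis: "P (axis i u) = axis (inv e i) u" "Q (axis k u) = axis (e k) u" for i k and u :: real
      by (auto simp: P_def Q_def axis_def vec_eq_iff e_inv
          dest: arg_cong[of _ _ e] arg_cong[of _ _ "inv e"])
    show "P ` Basis \<subseteq> Basis" "Q ` Basis \<subseteq> Basis"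
      by (auto simp: Basis_vec_def axis)
  qed (simp_all add: QP PQ)
  note lborel_P = lborel_distr_basis_permutation[OF lin_P this]
  have inj_P: "inj P"
    by (metis QP injI)
  have cont_P: "continuous_on A P" for A
    using lin_P by (intro linear_continuous_on) (simp add: linear_conv_bounded_linear)
  have PK: "compact (P ` K)"
    using cont_P K by (rule compact_continuous_image)
  have "emeasure lborel (P ` K) = emeasure lborel (P -` P ` K)"
    using PK cont_P
    by (subst lborel_P[symmetric], subst emeasure_distr)
      (auto simp: borel_compact intro: borel_measurable_continuous_onI)
  then have "measure lborel (P ` K) = measure lborel K"
    by (simp add: measure_def inj_vimage_image_eq[OF inj_P])
  then show ?thesis
    using K PK by (simp add: borel_compact P_def)
qed

lemma measure_linear_image_compact:
  fixes f :: "real^'n::finite \<Rightarrow> real^'n"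
  assumes f: "linear f" and S: "compact S"
  shows "measure lebesgue (f ` S) = \<bar>det (matrix f)\<bar> * measure lebesgue S"
proof -
  obtain e :: "'n ranked \<Rightarrow> 'n" where e: "bij e"
    using finite_same_card_bij[of "UNIV :: 'n ranked set" "UNIV :: 'n set"] by (auto simp: card_ranked)
  define P :: "real^'n \<Rightarrow> real^'n ranked" where "P x = (\<chi> k. x $ e k)" for x
  define Q :: "real^'n ranked \<Rightarrow> real^'n" where "Q y = (\<chi> i. y $ inv e i)" for y
  have e_inv: "e (inv e i) = i" "inv e (e k) = k" for i k
    using e by (simp_all add: bij_is_surj surj_f_inv_f bij_is_inj)
  have QP: "Q (P x) = x" for x
    by (simp add: P_def Q_def vec_eq_iff e_inv)
  have Q_axis: "Q (axis k 1) = axis (e k) 1" for k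
    by (auto simp: Q_def axis_def vec_eq_iff e_inv dest: arg_cong[of _ _ "inv e"])
  have cont_P: "continuous_on A P" for A
    by (intro linear_continuous_on) (auto simp: P_def vec_eq_iff linear_conv_bounded_linear[symmetric]
        intro!: linearI)
  define g where "g = P \<circ> f \<circ> Q"
  have lin_g: "linear g"
    unfolding g_def P_def Q_def using f
    by (intro linear_compose) (auto simp: vec_eq_iff intro!: linearI)
  have "matrix g = (\<chi> k l. matrix f $ e k $ e l)"
    by (simp add: g_def matrix_def P_def Q_axis vec_eq_iff)
  then have det_g: "det (matrix g) = det (matrix f)"
    by (simp add: det_reindex[OF e])
  have "g ` P ` S = P ` f ` S"
    by (simp add: g_def image_comp QP comp_def)
  moreover have "compact (f ` S)"
    using S f by (intro compact_continuous_image linear_continuous_on) (simp add: linear_conv_bounded_linear)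
  ultimately have "measure lebesgue (f ` S) = measure lebesgue (g ` P ` S)"
    using measure_reindex_image[OF e] by (simp add: P_def)
  also have "\<dots> = \<bar>det (matrix g)\<bar> * measure lebesgue (P ` S)"
    using S cont_P by (intro measure_linear_image lin_g lmeasurable_compact compact_continuous_image)
  finally show ?thesis
    using measure_reindex_image[OF e S] by (simp add: det_g P_def)
qed

section \<open>Slicing and integrals over truncated cones\<close>

lemma nn_integral_lborel_affine:
  fixes G :: "'a::euclidean_space \<Rightarrow> ennreal"
  assumes [measurable]: "G \<in> borel_measurable borel" and c: "c \<noteq> 0"
  shows "(\<integral>\<^sup>+x. G x \<partial>lborel) = ennreal (\<bar>c\<bar> ^ DIM('a)) * (\<integral>\<^sup>+u. G (t + c *\<^sub>R u) \<partial>lborel)"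
proof -
  have "(\<integral>\<^sup>+x. G x \<partial>lborel)
      = (\<integral>\<^sup>+x. G x \<partial>density (distr lborel borel (\<lambda>u. t + c *\<^sub>R u)) (\<lambda>_. \<bar>c\<bar> ^ DIM('a)))"
    by (subst lborel_affine[OF c, of t]) (rule refl)
  also have "\<dots> = (\<integral>\<^sup>+u. ennreal (\<bar>c\<bar> ^ DIM('a)) * G (t + c *\<^sub>R u) \<partial>lborel)"
    by (simp add: nn_integral_density nn_integral_distr)
  finally show ?thesis
    by (simp add: nn_integral_cmult)
qed

lemma emeasure_lborel_affine_image:
  fixes A :: "'a::euclidean_space set"
  assumes A: "A \<in> sets borel" and c: "c \<noteq> 0"
  shows "emeasure lborel ((\<lambda>u. t + c *\<^sub>R u) ` A) = ennreal (\<bar>c\<bar> ^ DIM('a)) * emeasure lborel A"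
proof -
  let ?T = "\<lambda>u. t + c *\<^sub>R u"
  have image_eq: "?T ` A = (\<lambda>x. (1 / c) *\<^sub>R (x - t)) -` A"
    using c by (force simp: image_iff)
  have "(\<lambda>x. (1 / c) *\<^sub>R (x - t)) \<in> borel_measurable borel"
    by (intro borel_measurable_continuous_onI continuous_intros)
  from measurable_sets[OF this A] have [measurable]: "?T ` A \<in> sets borel"
    by (simp add: image_eq)
  have "emeasure lborel (?T ` A)
      = emeasure (density (distr lborel borel ?T) (\<lambda>_. \<bar>c\<bar> ^ DIM('a))) (?T ` A)"
    by (subst lborel_affine[OF c, of t]) (rule refl)
  also have "\<dots> = ennreal (\<bar>c\<bar> ^ DIM('a)) * emeasure lborel (?T -` ?T ` A)"
    by (simp add: emeasure_density_const emeasure_distr)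
  also have "?T -` ?T ` A = A"
    using c by auto
  finally show ?thesis .
qed

lemma nn_integral_power_unit_interval:
  "(\<integral>\<^sup>+z. indicator {0<..1} z * ennreal (z ^ k) \<partial>lborel) = ennreal (1 / (real k + 1))"
proof -
  have "(\<integral>\<^sup>+z. indicator {0<..1} z * ennreal (z ^ k) \<partial>lborel)
      = (\<integral>\<^sup>+z. ennreal (z ^ k) * indicator {0..1} z \<partial>lborel)"
    using AE_lborel_singleton[of 0]
    by (intro nn_integral_cong_AE) (auto split: split_indicator elim!: eventually_mono)
  also have "\<dots> = ennreal (1 ^ Suc k / Suc k - 0 ^ Suc k / Suc k)"
    by (rule nn_integral_FTC_Icc) (auto intro!: derivative_eq_intros simp del: power_Suc of_nat_Suc)
  finally show ?thesis
    by (simp add: add.commute)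
qed

lemma nn_integral_truncated_cone:
  fixes g :: "'a::euclidean_space \<Rightarrow> ennreal"
  assumes [measurable]: "g \<in> borel_measurable borel"
  shows "(\<integral>\<^sup>+z. \<integral>\<^sup>+x. indicator {0<..1} z * ennreal (z ^ m) * g ((1 / z) *\<^sub>R x) \<partial>lborel \<partial>lborel)
       = ennreal (1 / (real (DIM('a) + m) + 1)) * (\<integral>\<^sup>+u. g u \<partial>lborel)"
proof -
  have slice: "(\<integral>\<^sup>+x. indicator {0<..1} z * ennreal (z ^ m) * g ((1 / z) *\<^sub>R x) \<partial>lborel)
      = indicator {0<..1} z * ennreal (z ^ (DIM('a) + m)) * (\<integral>\<^sup>+u. g u \<partial>lborel)" for z :: real
  proof (cases "z \<in> {0<..1}")
    case True
    have "(\<integral>\<^sup>+x. g ((1 / z) *\<^sub>R x) \<partial>lborel) = ennreal (z ^ DIM('a)) * (\<integral>\<^sup>+u. g u \<partial>lborel)"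
      using True by (subst nn_integral_lborel_affine[of _ z 0]) auto
    then show ?thesis
      using True by (simp add: nn_integral_cmult power_add ennreal_mult' mult_ac)
  qed simp
  have "(\<integral>\<^sup>+z. \<integral>\<^sup>+x. indicator {0<..1} z * ennreal (z ^ m) * g ((1 / z) *\<^sub>R x) \<partial>lborel \<partial>lborel)
      = (\<integral>\<^sup>+z. indicator {0<..1} z * ennreal (z ^ (DIM('a) + m)) \<partial>lborel) * (\<integral>\<^sup>+u. g u \<partial>lborel)"
    by (simp add: slice nn_integral_multc)
  then show ?thesis
    by (simp add: nn_integral_power_unit_interval)
qed

lemma nn_integral_truncated_cone_swap:
  fixes g :: "'a::euclidean_space \<Rightarrow> ennreal"
  assumes g: "g \<in> borel_measurable borel"
  shows "(\<integral>\<^sup>+x. \<integral>\<^sup>+z. indicator {0<..1} z * ennreal (z ^ m) * g ((1 / z) *\<^sub>R x) \<partial>lborel \<partial>lborel)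
       = ennreal (1 / (real (DIM('a) + m) + 1)) * (\<integral>\<^sup>+u. g u \<partial>lborel)"
proof -
  have "(\<lambda>p :: 'a \<times> real. (1 / snd p) *\<^sub>R fst p) \<in> borel_measurable borel"
    by (intro borel_measurable_scaleR borel_measurable_divide borel_measurable_const
        borel_measurable_continuous_onI continuous_intros)
  from measurable_compose[OF this g]
  have [measurable]: "(\<lambda>p. g ((1 / snd p) *\<^sub>R fst p)) \<in> borel_measurable borel"
    by simp
  have [measurable]: "(\<lambda>p :: 'a \<times> real. snd p) \<in> borel_measurable borel"
    by (intro borel_measurable_continuous_onI continuous_intros)
  have "(\<lambda>p :: 'a \<times> real. indicator {0<..1} (snd p) * ennreal (snd p ^ m) * g ((1 / snd p) *\<^sub>R fst p))
      \<in> borel_measurable borel"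
    by measurable
  then have "(\<integral>\<^sup>+x. \<integral>\<^sup>+z. indicator {0<..1} z * ennreal (z ^ m) * g ((1 / z) *\<^sub>R x) \<partial>lborel \<partial>lborel)
      = (\<integral>\<^sup>+z. \<integral>\<^sup>+x. indicator {0<..1} z * ennreal (z ^ m) * g ((1 / z) *\<^sub>R x) \<partial>lborel \<partial>lborel)"
    by (intro lborel_pair.Fubini'[symmetric]) (simp add: lborel_prod split_beta')
  then show ?thesis
    using nn_integral_truncated_cone[OF g] by simp
qed

lemma emeasure_lborel_prod_fst_fibers:
  fixes C :: "('a::euclidean_space \<times> 'b::euclidean_space) set"
  assumes "C \<in> sets borel"
  shows "emeasure lborel C = (\<integral>\<^sup>+x. emeasure lborel (Pair x -` C) \<partial>lborel)"
proof -
  have "C \<in> sets (lborel \<Otimes>\<^sub>M lborel)"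
    using assms by (subst lborel_prod) simp
  from lborel.emeasure_pair_measure_alt[OF this] show ?thesis
    by (simp only: lborel_prod)
qed

lemma emeasure_lborel_prod_snd_fibers:
  fixes C :: "('a::euclidean_space \<times> 'b::euclidean_space) set"
  assumes "C \<in> sets borel"
  shows "emeasure lborel C = (\<integral>\<^sup>+y. emeasure lborel ((\<lambda>x. (x, y)) -` C) \<partial>lborel)"
proof -
  have "C \<in> sets (lborel \<Otimes>\<^sub>M lborel)"
    using assms by (subst lborel_prod) simp
  from lborel_pair.emeasure_pair_measure_alt2[OF this] show ?thesis
    by (simp only: lborel_prod)
qed

lemma integrable_on_compact_continuous:
  fixes f :: "'a::euclidean_space \<Rightarrow> real"
  assumes "compact S" "continuous_on S f"
  shows "f integrable_on S"
proof -
  have "((\<lambda>x. indicator S x *\<^sub>R f x) has_integral (\<integral>x. indicator S x *\<^sub>R f x \<partial>lborel)) UNIV"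
    using borel_integrable_compact[OF assms] by (rule has_integral_integral_lborel)
  then have "(\<lambda>x. if x \<in> S then f x else 0) integrable_on UNIV"
    unfolding indicator_scaleR_eq_if by (rule has_integral_integrable)
  then show ?thesis
    by (simp add: integrable_restrict_UNIV)
qed

lemma nn_integral_compact_continuous:
  fixes f :: "'a::euclidean_space \<Rightarrow> real"
  assumes "compact S" "continuous_on S f" "\<And>x. x \<in> S \<Longrightarrow> 0 \<le> f x"
  shows "(\<integral>\<^sup>+x. ennreal (f x) * indicator S x \<partial>lborel) = ennreal (integral S f)"
  using assms integrable_on_compact_continuous
  by (intro nn_integral_has_integral_lebesgue' integrable_integral) auto

section \<open>Perspective regions\<close>

definition perspective_region ::
    "'a::euclidean_space set \<Rightarrow> ('a \<Rightarrow> real) \<Rightarrow> ('a \<Rightarrow> real) \<Rightarrow> ('a \<times> real \<times> real) set" where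
  "perspective_region K l u = {(x, y, z). 0 < z \<and> z \<le> 1 \<and> (1 / z) *\<^sub>R x \<in> K \<and>
      z * l ((1 / z) *\<^sub>R x) \<le> y \<and> y \<le> z * u ((1 / z) *\<^sub>R x)}"

lemma closed_perspective_region_above:
  assumes K: "compact K" and l: "continuous_on K l" and u: "continuous_on K u" and "0 < e"
  shows "closed {p \<in> perspective_region K l u. e \<le> snd (snd p)}"
proof -
  let ?z = "\<lambda>p :: 'a \<times> real \<times> real. snd (snd p)"
  let ?y = "\<lambda>p :: 'a \<times> real \<times> real. fst (snd p)"
  let ?dehom = "\<lambda>p :: 'a \<times> real \<times> real. (1 / ?z p) *\<^sub>R fst p"
  define S where "S = {p. e \<le> ?z p \<and> ?z p \<le> 1} \<inter> ?dehom -` K"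
  have cont_dehom: "continuous_on {p. e \<le> ?z p \<and> ?z p \<le> 1} ?dehom"
    using \<open>0 < e\<close> by (intro continuous_intros) auto
  have S: "closed S"
    unfolding S_def using K
    by (intro continuous_closed_preimage cont_dehom closed_Collect_conj closed_Collect_le
        continuous_intros compact_imp_closed)
  have cont_K: "continuous_on S (\<lambda>p. h (?dehom p))" if "continuous_on K h" for h :: "'a \<Rightarrow> real"
    using that by (rule continuous_on_compose2[OF _ continuous_on_subset[OF cont_dehom]])
      (auto simp: S_def)
  have "closed {p \<in> S. ?z p * l (?dehom p) \<le> ?y p}" "closed {p \<in> S. ?y p \<le> ?z p * u (?dehom p)}"
    by (intro continuous_on_closed_Collect_le continuous_intros cont_K l u S)+
  moreover have "{p \<in> perspective_region K l u. e \<le> ?z p}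
      = {p \<in> S. ?z p * l (?dehom p) \<le> ?y p} \<inter> {p \<in> S. ?y p \<le> ?z p * u (?dehom p)}"
    using \<open>0 < e\<close> by (auto simp: perspective_region_def S_def)
  ultimately show ?thesis
    by (simp add: closed_Int)
qed

lemma closure_perspective_region_imp_mem:
  assumes K: "compact K" and l: "continuous_on K l" and u: "continuous_on K u"
  assumes p: "p \<in> closure (perspective_region K l u)" "snd (snd p) \<noteq> 0"
  shows "p \<in> perspective_region K l u"
proof -
  let ?P = "perspective_region K l u"
  have "closure ?P \<subseteq> {p. 0 \<le> snd (snd p)}"
    by (intro closure_minimal closed_Collect_le continuous_intros)
      (auto simp: perspective_region_def)
  with p have "0 < snd (snd p)"
    by fastforce
  define e where "e = snd (snd p) / 2"
  have "?P \<subseteq> {q \<in> ?P. e \<le> snd (snd q)} \<union> {q. snd (snd q) \<le> e}"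
    by auto
  then have "closure ?P \<subseteq> {q \<in> ?P. e \<le> snd (snd q)} \<union> {q. snd (snd q) \<le> e}"
    using \<open>0 < snd (snd p)\<close> closed_perspective_region_above[OF K l u, of e]
    by (intro closure_minimal closed_Un closed_Collect_le continuous_intros) (auto simp: e_def)
  with p(1) \<open>0 < snd (snd p)\<close> show ?thesis
    by (auto simp: e_def)
qed

lemma emeasure_closure_perspective_region_fiber:
  assumes K: "compact K" and l: "continuous_on K l" and u: "continuous_on K u"
    and le: "\<And>x. x \<in> K \<Longrightarrow> l x \<le> u x"
  shows "emeasure lborel (Pair x -` closure (perspective_region K l u))
    = (\<integral>\<^sup>+z. indicator {0<..1} z * ennreal (z ^ 1) *
         (ennreal (u ((1 / z) *\<^sub>R x) - l ((1 / z) *\<^sub>R x)) * indicator K ((1 / z) *\<^sub>R x)) \<partial>lborel)"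
proof -
  let ?P = "perspective_region K l u"
  have "Pair x -` closure ?P \<in> sets borel"
    by (intro borel_closed closed_vimage continuous_intros) simp
  then have "emeasure lborel (Pair x -` closure ?P)
      = (\<integral>\<^sup>+z. emeasure lborel ((\<lambda>y. (y, z)) -` Pair x -` closure ?P) \<partial>lborel)"
    by (rule emeasure_lborel_prod_snd_fibers)
  also have "\<dots> = (\<integral>\<^sup>+z. indicator {0<..1} z * ennreal (z ^ 1) *
         (ennreal (u ((1 / z) *\<^sub>R x) - l ((1 / z) *\<^sub>R x)) * indicator K ((1 / z) *\<^sub>R x)) \<partial>lborel)"
  proof (rule nn_integral_cong_AE)
    show "AE z in lborel. emeasure lborel ((\<lambda>y. (y, z)) -` Pair x -` closure ?P)
        = indicator {0<..1} z * ennreal (z ^ 1) *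
          (ennreal (u ((1 / z) *\<^sub>R x) - l ((1 / z) *\<^sub>R x)) * indicator K ((1 / z) *\<^sub>R x))"
      using AE_lborel_singleton[of 0]
    proof eventually_elim
      case (elim z)
      then have "(\<lambda>y. (y, z)) -` Pair x -` closure ?P = {y. (x, y, z) \<in> ?P}"
        using closure_perspective_region_imp_mem[OF K l u] closure_subset[of ?P] by auto
      also have "\<dots> = (if 0 < z \<and> z \<le> 1 \<and> (1 / z) *\<^sub>R x \<in> K
          then {z * l ((1 / z) *\<^sub>R x) .. z * u ((1 / z) *\<^sub>R x)} else {})"
        by (auto simp: perspective_region_def)
      finally show ?case
        using le[of "(1 / z) *\<^sub>R x"]
        by (auto simp: indicator_def ennreal_mult'[symmetric] right_diff_distrib mult_left_mono)
    qed
  qed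
  finally show ?thesis .
qed

lemma measure_closure_perspective_region:
  fixes K :: "'a::euclidean_space set"
  assumes K: "compact K" and l: "continuous_on K l" and u: "continuous_on K u"
    and le: "\<And>x. x \<in> K \<Longrightarrow> l x \<le> u x"
  shows "measure lebesgue (closure (perspective_region K l u))
    = (integral K u - integral K l) / (real DIM('a) + 2)"
proof -
  let ?C = "closure (perspective_region K l u)"
  define g where "g x = ennreal (u x - l x) * indicator K x" for x
  have g: "g \<in> borel_measurable borel"
  proof -
    have "(\<lambda>x. indicator K x *\<^sub>R (u x - l x)) \<in> borel_measurable borel"
      using K l u by (intro borel_measurable_continuous_on_indicator borel_compact continuous_intros)
    moreover have "g = (\<lambda>x. ennreal (indicator K x *\<^sub>R (u x - l x)))"
      by (auto simp: g_def fun_eq_iff indicator_def)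
    ultimately show ?thesis
      using measurable_compose[OF _ measurable_ennreal] by simp
  qed
  have int_g: "(\<integral>\<^sup>+x. g x \<partial>lborel) = ennreal (integral K u - integral K l)"
    using K l u le unfolding g_def
    by (subst nn_integral_compact_continuous)
      (auto intro: continuous_on_diff simp: integral_diff integrable_on_compact_continuous)
  have "emeasure lborel ?C = (\<integral>\<^sup>+x. emeasure lborel (Pair x -` ?C) \<partial>lborel)"
    by (intro emeasure_lborel_prod_fst_fibers borel_closed) simp
  also have "\<dots> = (\<integral>\<^sup>+x. \<integral>\<^sup>+z. indicator {0<..1} z * ennreal (z ^ 1) * g ((1 / z) *\<^sub>R x) \<partial>lborel \<partial>lborel)"
    using K l u le by (simp add: emeasure_closure_perspective_region_fiber g_def)
  also have "\<dots> = ennreal (1 / (real DIM('a) + 2)) * ennreal (integral K u - integral K l)"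
    by (subst nn_integral_truncated_cone_swap[OF g]) (simp add: int_g add.commute)
  finally have "emeasure lborel ?C
      = ennreal (1 / (real DIM('a) + 2)) * ennreal (integral K u - integral K l)" .
  moreover have "integral K l \<le> integral K u"
    using K l u le by (intro integral_le integrable_on_compact_continuous)
  ultimately have "emeasure lborel ?C = ennreal ((integral K u - integral K l) / (real DIM('a) + 2))"
    by (simp add: ennreal_mult'[symmetric])
  then show ?thesis
    using \<open>integral K l \<le> integral K u\<close> by (simp add: measure_def borel_closed)
qed

section \<open>Simplices, barycentric coordinates and the vertex matrix\<close>

lemma std_simplex_cart:
  "convex hull (insert 0 Basis) = {w :: real^'m. (\<forall>i. 0 \<le> w $ i) \<and> sum (($) w) UNIV \<le> 1}"
proof -
  have B: "(Basis :: (real^'m) set) = range (\<lambda>k. axis k 1)"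
    by (auto simp: Basis_vec_def)
  have "sum (\<lambda>b. w \<bullet> b) Basis = sum (($) w) UNIV" for w :: "real^'m"
    unfolding B by (subst sum.reindex) (auto simp: inj_on_def axis_eq_axis inner_axis)
  moreover have "(\<forall>b\<in>Basis. 0 \<le> w \<bullet> b) \<longleftrightarrow> (\<forall>i. 0 \<le> w $ i)" for w :: "real^'m"
    unfolding B by (simp add: inner_axis)
  ultimately show ?thesis
    unfolding std_simplex by simp
qed

definition vec_of_pair :: "(real^'n) \<times> real \<Rightarrow> real^'n option" where
  "vec_of_pair p = (\<chi> i. case i of None \<Rightarrow> snd p | Some k \<Rightarrow> fst p $ k)"

lemma linear_vec_of_pair: "linear vec_of_pair"
  by (rule linearI) (auto simp: vec_of_pair_def vec_eq_iff split: option.split)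

lemma bij_betw_vec_of_pair_Basis: "bij_betw (vec_of_pair :: (real^'n::finite) \<times> real \<Rightarrow> _) Basis Basis"
proof (rule bij_betw_byWitness[of _ "\<lambda>w. (\<chi> k. w $ Some k, w $ None)"])
  have axis: "vec_of_pair (axis k 1 :: real^'n, 0) = axis (Some k) 1"
    "vec_of_pair (0 :: real^'n, 1) = axis None 1" for k :: 'n
    by (auto simp: vec_of_pair_def axis_def vec_eq_iff split: option.split)
  show "vec_of_pair ` Basis \<subseteq> (Basis :: (real^'n option) set)"
  proof (rule image_subsetI)
    fix b :: "(real^'n) \<times> real" assume "b \<in> Basis"
    then consider k where "b = (axis k 1, 0)" | "b = (0, 1)"
      by (auto simp: Basis_prod_def Basis_vec_def)
    then show "vec_of_pair b \<in> Basis"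
      by cases (auto simp: Basis_vec_def axis)
  qed
  have "(\<chi> k. axis i 1 $ Some k, axis i 1 $ None) \<in> (Basis :: ((real^'n) \<times> real) set)" for i :: "'n option"
    by (cases i) (auto simp: Basis_prod_def Basis_vec_def axis_def vec_eq_iff)
  then show "(\<lambda>w. (\<chi> k. w $ Some k, w $ None)) ` Basis \<subseteq> (Basis :: ((real^'n) \<times> real) set)"
    by (auto simp: Basis_vec_def)
qed (auto simp: vec_of_pair_def vec_eq_iff split: option.split)

lemma lborel_distr_vec_of_pair: "distr lborel borel (vec_of_pair :: (real^'n::finite) \<times> real \<Rightarrow> _) = lborel"
  by (rule lborel_distr_basis_permutation[OF linear_vec_of_pair bij_betw_vec_of_pair_Basis])

lemma vertex_matrix_mult_None: "(vertex_matrix v *v w) $ None = (\<Sum>j\<in>UNIV. w $ j)"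
  by (simp add: vertex_matrix_def matrix_vector_mult_def)

lemma vertex_matrix_mult_Some: "(vertex_matrix v *v w) $ Some k = (\<Sum>j\<in>UNIV. w $ j *\<^sub>R v j) $ k"
  by (simp add: vertex_matrix_def matrix_vector_mult_def mult.commute)

lemma transpose_vertex_matrix_mult:
  "(transpose (vertex_matrix v) *v y) $ j = (\<chi> k. y $ Some k) \<bullet> v j + y $ None"
  by (simp add: vertex_matrix_def matrix_vector_mult_def transpose_def UNIV_option_conv
      sum.reindex inner_vec_def mult.commute)

lemma vertex_matrix_mult:
  "vertex_matrix v *v w = vec_of_pair (\<Sum>j\<in>UNIV. w $ j *\<^sub>R v j, \<Sum>j\<in>UNIV. w $ j)"
  by (simp add: vec_eq_iff vec_of_pair_def vertex_matrix_mult_None vertex_matrix_mult_Some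
      split: option.split)

locale affine_simplex =
  fixes v :: "'n::finite option \<Rightarrow> real^'n"
  assumes inj_vertices: "inj v" and affine_independent: "\<not> affine_dependent (range v)"
begin

abbreviation J :: "(real^'n) set" where "J \<equiv> convex hull (range v)"

lemma mem_simplex_iff:
  "x \<in> J \<longleftrightarrow> (\<exists>a. (\<forall>j. 0 \<le> a j) \<and> sum a UNIV = 1 \<and> x = (\<Sum>j\<in>UNIV. a j *\<^sub>R v j))"
proof -
  have "J = {\<Sum>j\<in>UNIV. a j *\<^sub>R s j | a s. (\<forall>j. 0 \<le> a j) \<and> sum a UNIV = 1 \<and> (\<forall>j. s j \<in> {v j})}"
    using convex_hull_finite_union[of UNIV "\<lambda>j. {v j}"] by (simp add: UNION_singleton_eq_range)
  also have "\<dots> = {\<Sum>j\<in>UNIV. a j *\<^sub>R v j | a. (\<forall>j. 0 \<le> a j) \<and> sum a UNIV = 1}"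
    by (auto simp flip: fun_eq_iff)
  finally show ?thesis
    by auto
qed

lemma compact_simplex: "compact J"
  by (simp add: finite_imp_compact_convex_hull)

lemma invertible_vertex_matrix: "invertible (vertex_matrix v)"
proof -
  have "w = 0" if "vertex_matrix v *v w = 0" for w
  proof (rule ccontr)
    assume "w \<noteq> 0"
    then obtain j where "w $ j \<noteq> 0"
      by (auto simp: vec_eq_iff)
    define U where "U x = w $ inv v x" for x
    have U_v: "U (v j) = w $ j" for j
      using inj_vertices by (simp add: U_def)
    have "(\<Sum>j\<in>UNIV. w $ j) = 0" "(\<Sum>j\<in>UNIV. w $ j *\<^sub>R v j) = 0"
      using that vertex_matrix_mult_None[of v w] vertex_matrix_mult_Some[of v w]
      by (auto simp: vec_eq_iff)
    then have "sum U (range v) = 0" "(\<Sum>x\<in>range v. U x *\<^sub>R x) = 0"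
      using inj_vertices by (simp_all add: sum.reindex U_v)
    moreover have "\<exists>x\<in>range v. U x \<noteq> 0"
      using \<open>w $ j \<noteq> 0\<close> by (auto simp: U_v)
    ultimately have "affine_dependent (range v)"
      by (subst affine_dependent_explicit_finite) auto
    with affine_independent show False ..
  qed
  then obtain B where "B ** vertex_matrix v = mat 1"
    using matrix_left_invertible_ker by blast
  then show ?thesis
    using matrix_left_right_inverse invertible_def by blast
qed

lemma affine_interp_eq:
  obtains a b where "affine_interp v g = (\<lambda>x. a \<bullet> x + b)" "\<And>j. a \<bullet> v j + b = g (v j)"
proof -
  let ?M = "transpose (vertex_matrix v)"
  have bij: "bij ((*v) ?M)"
    using invertible_eq_bij transpose_invertible invertible_vertex_matrix by blast
  have lift: "?M *v y = (\<chi> j. c j) \<longleftrightarrow> (\<forall>j. (\<chi> k. y $ Some k) \<bullet> v j + y $ None = c j)" for y c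
    by (simp only: vec_eq_iff transpose_vertex_matrix_mult vec_lambda_beta)
  obtain y where y: "?M *v y = (\<chi> j. g (v j))"
    using bij by (metis bij_is_surj surjD)
  define a where "a = (\<chi> k. y $ Some k)"
  define b where "b = y $ None"
  have ab: "a \<bullet> v j + b = g (v j)" for j
    using y lift by (simp add: a_def b_def)
  have "h = (\<lambda>x. a \<bullet> x + b)"
    if "\<exists>a' b'. h = (\<lambda>x. a' \<bullet> x + b')" "\<forall>j. h (v j) = g (v j)" for h
  proof -
    from that obtain a' b' where h: "h = (\<lambda>x. a' \<bullet> x + b')" by blast
    define y' :: "real^'n option" where "y' = (\<chi> i. case i of None \<Rightarrow> b' | Some k \<Rightarrow> a' $ k)"
    have "?M *v y' = ?M *v y"
      using that(2) y lift[of y'] by (simp add: h y'_def)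
    then have "y' = y"
      by (rule injD[OF bij_is_inj[OF bij]])
    then show ?thesis
      by (simp add: h a_def b_def y'_def vec_eq_iff[of a'] flip: \<open>y' = y\<close>)
  qed
  then have "affine_interp v g = (\<lambda>x. a \<bullet> x + b)"
    unfolding affine_interp_def using ab by (intro the_equality) auto
  with ab show ?thesis
    using that by blast
qed

lemma affine_interp_convex_comb:
  assumes "sum a UNIV = 1"
  shows "affine_interp v g (\<Sum>j\<in>UNIV. a j *\<^sub>R v j) = (\<Sum>j\<in>UNIV. a j * g (v j))"
proof -
  obtain c b where cb: "affine_interp v g = (\<lambda>x. c \<bullet> x + b)" "\<And>j. c \<bullet> v j + b = g (v j)"
    using affine_interp_eq[of g] by metis
  have "c \<bullet> (\<Sum>j\<in>UNIV. a j *\<^sub>R v j) + b = (\<Sum>j\<in>UNIV. a j * (c \<bullet> v j + b))"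
    using assms by (simp add: inner_sum_right distrib_left sum.distrib flip: sum_distrib_right)
  then show ?thesis
    by (simp add: cb)
qed

lemma continuous_on_affine_interp: "continuous_on S (affine_interp v g)"
proof -
  obtain c b where affine: "affine_interp v g = (\<lambda>x. c \<bullet> x + b)"
    using affine_interp_eq[of g] by metis
  show ?thesis
    unfolding affine by (intro continuous_intros)
qed

lemma convex_le_affine_interp:
  assumes "convex_on J f" "x \<in> J"
  shows "f x \<le> affine_interp v f x"
proof -
  obtain a where a: "\<forall>j. 0 \<le> a j" "sum a UNIV = 1" "x = (\<Sum>j\<in>UNIV. a j *\<^sub>R v j)"
    using assms(2) mem_simplex_iff by blast
  have "f x \<le> (\<Sum>j\<in>UNIV. a j * f (v j))"
    unfolding a(3) using a(1,2) by (intro convex_on_sum[OF _ _ assms(1)]) (auto intro: hull_inc)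
  also have "\<dots> = affine_interp v f x"
    by (simp add: a(2,3) affine_interp_convex_comb)
  finally show ?thesis .
qed

definition barycentric :: "'n option \<Rightarrow> real^'n \<Rightarrow> real" where
  "barycentric j = affine_interp v (\<lambda>x. if x = v j then 1 else 0)"

lemma barycentric_convex_comb:
  assumes "sum a UNIV = 1"
  shows "barycentric j (\<Sum>i\<in>UNIV. a i *\<^sub>R v i) = a j"
  using assms inj_vertices
  by (simp add: barycentric_def affine_interp_convex_comb inj_eq if_distrib cong: if_cong)

lemma barycentric_bounds:
  assumes "x \<in> J"
  shows "0 \<le> barycentric j x" "barycentric j x \<le> 1"
proof -
  obtain a where a: "\<forall>i. 0 \<le> a i" "sum a UNIV = 1" "x = (\<Sum>i\<in>UNIV. a i *\<^sub>R v i)"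
    using assms mem_simplex_iff by blast
  have "a j \<le> sum a UNIV"
    using a(1) by (intro member_le_sum) auto
  with a show "0 \<le> barycentric j x" "barycentric j x \<le> 1"
    by (simp_all add: barycentric_convex_comb)
qed

lemma continuous_on_barycentric: "continuous_on S (barycentric j)"
  unfolding barycentric_def by (rule continuous_on_affine_interp)

lemma affine_interp_eq_sum_barycentric:
  assumes "x \<in> J"
  shows "affine_interp v g x = (\<Sum>j\<in>UNIV. g (v j) * barycentric j x)"
proof -
  obtain a where a: "sum a UNIV = 1" "x = (\<Sum>i\<in>UNIV. a i *\<^sub>R v i)"
    using assms mem_simplex_iff by blast
  then show ?thesis
    by (simp add: affine_interp_convex_comb barycentric_convex_comb mult.commute)
qed

lemma barycentric_superlevel_set:
  assumes t: "0 < t" "t \<le> 1"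
  shows "{x \<in> J. 1 - t \<le> barycentric j x} = (\<lambda>u. (1 - t) *\<^sub>R v j + t *\<^sub>R u) ` J"
proof (intro equalityI subsetI)
  fix x assume "x \<in> {x \<in> J. 1 - t \<le> barycentric j x}"
  then obtain a where a: "\<forall>i. 0 \<le> a i" "sum a UNIV = 1" "x = (\<Sum>i\<in>UNIV. a i *\<^sub>R v i)"
    and aj: "1 - t \<le> a j"
    by (auto simp: mem_simplex_iff barycentric_convex_comb)
  define c where "c i = (a i - (if i = j then 1 - t else 0)) / t" for i
  have "(\<Sum>i\<in>UNIV. c i *\<^sub>R v i) \<in> J"
    unfolding mem_simplex_iff using a aj t
    by (intro exI[of _ c]) (auto simp: c_def sum_subtractf simp flip: sum_divide_distrib)
  moreover have "x = (1 - t) *\<^sub>R v j + t *\<^sub>R (\<Sum>i\<in>UNIV. c i *\<^sub>R v i)"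
  proof -
    have "t *\<^sub>R (\<Sum>i\<in>UNIV. c i *\<^sub>R v i) = (\<Sum>i\<in>UNIV. (a i - (if i = j then 1 - t else 0)) *\<^sub>R v i)"
      using t by (simp add: c_def scaleR_sum_right)
    then show ?thesis
      by (simp add: a(3) scaleR_diff_left sum_subtractf if_distrib[of "\<lambda>r. r *\<^sub>R _"] cong: if_cong)
  qed
  ultimately show "x \<in> (\<lambda>u. (1 - t) *\<^sub>R v j + t *\<^sub>R u) ` J"
    by blast
next
  fix x assume "x \<in> (\<lambda>u. (1 - t) *\<^sub>R v j + t *\<^sub>R u) ` J"
  then obtain a where a: "\<forall>i. 0 \<le> a i" "sum a UNIV = 1"
    and x: "x = (1 - t) *\<^sub>R v j + t *\<^sub>R (\<Sum>i\<in>UNIV. a i *\<^sub>R v i)"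
    by (auto simp: mem_simplex_iff)
  define b where "b i = t * a i + (if i = j then 1 - t else 0)" for i
  have "sum b UNIV = 1"
    using a(2) by (simp add: b_def sum.distrib flip: sum_distrib_left)
  moreover have "x = (\<Sum>i\<in>UNIV. b i *\<^sub>R v i)"
    by (simp add: b_def x sum.distrib scaleR_add_left scaleR_sum_right if_distrib[of "\<lambda>r. r *\<^sub>R _"]
        cong: if_cong)
  ultimately have b: "\<forall>i. 0 \<le> b i" "sum b UNIV = 1" "x = (\<Sum>i\<in>UNIV. b i *\<^sub>R v i)"
    using a(1) t by (auto simp: b_def)
  then have "x \<in> J" "barycentric j x = b j"
    by (auto simp: mem_simplex_iff barycentric_convex_comb)
  then show "x \<in> {x \<in> J. 1 - t \<le> barycentric j x}"
    using a(1) t by (simp add: b_def)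
qed

definition simplex_cone :: "((real^'n) \<times> real) set" where
  "simplex_cone = vec_of_pair -` ((*v) (vertex_matrix v) ` (convex hull (insert 0 Basis)))"

lemma mem_simplex_cone_iff:
  "(x, z) \<in> simplex_cone \<longleftrightarrow> (\<exists>w :: real^'n option.
    (\<forall>j. 0 \<le> w $ j) \<and> sum (($) w) UNIV = z \<and> z \<le> 1 \<and> x = (\<Sum>j\<in>UNIV. w $ j *\<^sub>R v j))"
proof -
  have inj: "inj vec_of_pair"
    by (rule injI)
      (auto simp: vec_of_pair_def vec_eq_iff prod_eq_iff dest: spec[of _ None] spec[of _ "Some _"])
  show ?thesis
    unfolding simplex_cone_def std_simplex_cart vimage_eq image_iff vertex_matrix_mult inj_eq[OF inj]
      prod.inject mem_Collect_eq Bex_def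
    by (intro ex_cong1) auto
qed

lemma simplex_cone_slice:
  assumes "z \<noteq> 0"
  shows "(x, z) \<in> simplex_cone \<longleftrightarrow> 0 < z \<and> z \<le> 1 \<and> (1 / z) *\<^sub>R x \<in> J"
proof
  assume "(x, z) \<in> simplex_cone"
  then obtain w where w: "\<forall>j. 0 \<le> w $ j" "sum (($) w) UNIV = z" "z \<le> 1" "x = (\<Sum>j\<in>UNIV. w $ j *\<^sub>R v j)"
    by (auto simp: mem_simplex_cone_iff)
  have "0 < z"
    using w(1,2) assms by (metis sum_nonneg order_less_le)
  moreover have "(1 / z) *\<^sub>R x \<in> J"
    unfolding mem_simplex_iff using w \<open>0 < z\<close>
    by (intro exI[of _ "\<lambda>j. w $ j / z"])
      (auto simp: scaleR_sum_right divide_simps simp flip: sum_divide_distrib)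
  ultimately show "0 < z \<and> z \<le> 1 \<and> (1 / z) *\<^sub>R x \<in> J"
    using w(3) by simp
next
  assume z: "0 < z \<and> z \<le> 1 \<and> (1 / z) *\<^sub>R x \<in> J"
  then obtain a where a: "\<forall>j. 0 \<le> a j" "sum a UNIV = 1" "(1 / z) *\<^sub>R x = (\<Sum>j\<in>UNIV. a j *\<^sub>R v j)"
    by (auto simp: mem_simplex_iff)
  have "x = z *\<^sub>R (\<Sum>j\<in>UNIV. a j *\<^sub>R v j)"
    using z by (simp flip: a(3))
  then show "(x, z) \<in> simplex_cone"
    unfolding mem_simplex_cone_iff using a z
    by (intro exI[of _ "\<chi> j. z * a j"]) (simp add: scaleR_sum_right flip: sum_distrib_left)
qed

lemma compact_std_simplex_image:
  "compact ((*v) (vertex_matrix v) ` (convex hull (insert 0 (Basis :: (real^'n option) set))))"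
  by (intro compact_continuous_image finite_imp_compact_convex_hull linear_continuous_on
      matrix_vector_mul_bounded_linear) auto

lemma closed_simplex_cone: "closed simplex_cone"
  unfolding simplex_cone_def
  using linear_vec_of_pair compact_std_simplex_image
  by (intro continuous_closed_vimage compact_imp_closed linear_continuous_at)
    (simp_all add: linear_conv_bounded_linear)

lemma emeasure_simplex_cone_det:
  "emeasure lborel simplex_cone = ennreal (\<bar>det (vertex_matrix v)\<bar> / fact (CARD('n) + 1))"
proof -
  let ?S = "convex hull (insert 0 (Basis :: (real^'n option) set))"
  let ?K = "(*v) (vertex_matrix v) ` ?S"
  have S: "compact ?S"
    by (intro finite_imp_compact_convex_hull) auto
  have K: "compact ?K"
    by (rule compact_std_simplex_image)
  have "emeasure lborel simplex_cone = emeasure (distr lborel borel vec_of_pair) ?K"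
    unfolding simplex_cone_def using K linear_vec_of_pair
    by (subst emeasure_distr) (auto simp: borel_compact linear_conv_bounded_linear
        intro: borel_measurable_continuous_onI linear_continuous_on)
  also have "\<dots> = ennreal (measure lebesgue ?K)"
    using K emeasure_bounded_finite[OF compact_imp_bounded[OF K]]
    by (simp add: lborel_distr_vec_of_pair emeasure_eq_ennreal_measure borel_compact)
  also have "measure lebesgue ?K = \<bar>det (vertex_matrix v)\<bar> * measure lebesgue ?S"
    using measure_linear_image_compact[OF matrix_vector_mul_linear S] by simp
  also have "measure lebesgue ?S = 1 / fact (CARD('n) + 1)"
    using S content_std_simplex[where 'a="real^'n option"] by (simp add: borel_compact)
  finally show ?thesis
    by simp
qed

lemma emeasure_simplex_cone_slices:
  "emeasure lborel simplex_cone = ennreal (1 / (real CARD('n) + 1)) * emeasure lborel J"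
proof -
  have J [measurable]: "J \<in> sets borel"
    by (simp add: borel_compact compact_simplex)
  have "emeasure lborel simplex_cone = (\<integral>\<^sup>+z. emeasure lborel ((\<lambda>x. (x, z)) -` simplex_cone) \<partial>lborel)"
    using closed_simplex_cone by (intro emeasure_lborel_prod_snd_fibers borel_closed)
  also have "\<dots> = (\<integral>\<^sup>+z. \<integral>\<^sup>+x.
      indicator {0<..1} z * ennreal (z ^ 0) * indicator J ((1 / z) *\<^sub>R x) \<partial>lborel \<partial>lborel)"
  proof (rule nn_integral_cong_AE)
    show "AE z in lborel. emeasure lborel ((\<lambda>x. (x, z)) -` simplex_cone)
        = (\<integral>\<^sup>+x. indicator {0<..1} z * ennreal (z ^ 0) * indicator J ((1 / z) *\<^sub>R x) \<partial>lborel)"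
      using AE_lborel_singleton[of 0]
    proof eventually_elim
      case (elim z)
      have slice: "(\<lambda>x. (x, z)) -` simplex_cone \<in> sets borel"
        using closed_simplex_cone by (intro borel_closed closed_vimage continuous_intros)
      have "indicator ((\<lambda>x. (x, z)) -` simplex_cone) x
          = indicator {0<..1} z * ennreal (z ^ 0) * indicator J ((1 / z) *\<^sub>R x)" for x
        using elim by (simp add: simplex_cone_slice indicator_def)
      then show ?case
        using slice by (simp flip: nn_integral_indicator)
    qed
  qed
  also have "\<dots> = ennreal (1 / (real CARD('n) + 1)) * emeasure lborel J"
    by (subst nn_integral_truncated_cone) simp_all
  finally show ?thesis .
qed

lemma emeasure_simplex_eq_measure: "emeasure lborel J = ennreal (measure lebesgue J)"
  using compact_simplex emeasure_bounded_finite[OF compact_imp_bounded[OF compact_simplex]]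
  by (simp add: emeasure_eq_ennreal_measure borel_compact)

lemma measure_simplex: "measure lebesgue J = \<bar>det (vertex_matrix v)\<bar> / fact CARD('n)"
proof -
  have "ennreal (measure lebesgue J / (real CARD('n) + 1))
      = ennreal (\<bar>det (vertex_matrix v)\<bar> / fact (CARD('n) + 1))"
    using emeasure_simplex_cone_slices emeasure_simplex_cone_det
    by (simp add: emeasure_simplex_eq_measure ennreal_mult'[symmetric])
  then have "measure lebesgue J = (real CARD('n) + 1) * (\<bar>det (vertex_matrix v)\<bar> / fact (CARD('n) + 1))"
    by (simp add: field_simps)
  also have "\<dots> = \<bar>det (vertex_matrix v)\<bar> / fact CARD('n)"
    by (simp add: add.commute)
  finally show ?thesis .
qed

definition barycentric_layer :: "'n option \<Rightarrow> ((real^'n) \<times> real) set" where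
  "barycentric_layer j = {(x, t). x \<in> J \<and> 1 - barycentric j x \<le> t \<and> t \<le> 1}"

lemma borel_barycentric_layer: "barycentric_layer j \<in> sets borel"
proof -
  have "barycentric_layer j = fst -` J \<inter> {p. 1 - barycentric j (fst p) \<le> snd p} \<inter> {p. snd p \<le> 1}"
    by (auto simp: barycentric_layer_def)
  then show ?thesis
    by (simp, intro borel_closed closed_Int closed_vimage_fst compact_imp_closed compact_simplex
        closed_Collect_le continuous_intros continuous_on_compose2[OF continuous_on_barycentric]) auto
qed

lemma emeasure_barycentric_layer:
  "emeasure lborel (barycentric_layer j) = ennreal (measure lebesgue J / (real CARD('n) + 1))"
proof -
  have [measurable]: "J \<in> sets borel"
    by (simp add: borel_compact compact_simplex)
  have "AE t in lborel. emeasure lborel ((\<lambda>x. (x, t)) -` barycentric_layer j)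
      = indicator {0<..1} t * ennreal (t ^ CARD('n)) * emeasure lborel J"
    using AE_lborel_singleton[of 0]
  proof eventually_elim
    case (elim t)
    show ?case
    proof (cases "0 < t \<and> t \<le> 1")
      case True
      then have "(\<lambda>x. (x, t)) -` barycentric_layer j = {x \<in> J. 1 - t \<le> barycentric j x}"
        by (auto simp: barycentric_layer_def)
      also have "\<dots> = (\<lambda>u. (1 - t) *\<^sub>R v j + t *\<^sub>R u) ` J"
        using True by (intro barycentric_superlevel_set) auto
      finally show ?thesis
        using True by (simp add: emeasure_lborel_affine_image)
    next
      case False
      with elim have "(\<lambda>x. (x, t)) -` barycentric_layer j = {}"
        using barycentric_bounds(2)[of _ j] by (force simp: barycentric_layer_def)
      then show ?thesis
        using False by simp
    qed
  qed
  then have "emeasure lborel (barycentric_layer j)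
      = (\<integral>\<^sup>+t. indicator {0<..1} t * ennreal (t ^ CARD('n)) * emeasure lborel J \<partial>lborel)"
    using borel_barycentric_layer by (simp add: emeasure_lborel_prod_snd_fibers nn_integral_cong_AE)
  also have "\<dots> = ennreal (measure lebesgue J / (real CARD('n) + 1))"
    by (simp add: nn_integral_multc nn_integral_power_unit_interval emeasure_simplex_eq_measure
        ennreal_mult'[symmetric])
  finally show ?thesis .
qed

lemma integral_barycentric: "integral J (barycentric j) = measure lebesgue J / (real CARD('n) + 1)"
proof -
  have fiber: "emeasure lborel (Pair x -` barycentric_layer j) = ennreal (barycentric j x) * indicator J x"
    for x
  proof (cases "x \<in> J")
    case True
    then have "Pair x -` barycentric_layer j = {1 - barycentric j x..1}"
      by (auto simp: barycentric_layer_def)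
    then show ?thesis
      using True barycentric_bounds[OF True, of j] by simp
  qed (simp add: barycentric_layer_def)
  have "ennreal (integral J (barycentric j))
      = (\<integral>\<^sup>+x. ennreal (barycentric j x) * indicator J x \<partial>lborel)"
    using barycentric_bounds by (intro nn_integral_compact_continuous[symmetric] compact_simplex
        continuous_on_barycentric)
  also have "\<dots> = emeasure lborel (barycentric_layer j)"
    by (simp add: emeasure_lborel_prod_fst_fibers[OF borel_barycentric_layer] fiber)
  also have "\<dots> = ennreal (measure lebesgue J / (real CARD('n) + 1))"
    by (rule emeasure_barycentric_layer)
  finally show ?thesis
    using compact_simplex continuous_on_barycentric barycentric_bounds
    by (simp add: integral_nonneg integrable_on_compact_continuous)
qed

lemma integral_affine_interp:
  "integral J (affine_interp v g) = (\<Sum>j\<in>UNIV. g (v j)) * measure lebesgue J / (real CARD('n) + 1)"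
proof -
  have integrable: "(\<lambda>x. c * barycentric j x) integrable_on J" for c j
    using compact_simplex
    by (intro integrable_on_compact_continuous continuous_intros continuous_on_barycentric)
  have "integral J (affine_interp v g) = integral J (\<lambda>x. \<Sum>j\<in>UNIV. g (v j) * barycentric j x)"
    by (intro integral_cong affine_interp_eq_sum_barycentric)
  also have "\<dots> = (\<Sum>j\<in>UNIV. g (v j) * integral J (barycentric j))"
    using integrable by (simp add: integral_sum)
  finally show ?thesis
    by (simp add: integral_barycentric flip: sum_distrib_right sum_divide_distrib)
qed

lemma persp_relax_eq_closure_perspective_region:
  "persp_relax v f = closure (perspective_region J f (affine_interp v f))"
proof -
  have "x \<in> (\<lambda>p. z *\<^sub>R p) ` J \<longleftrightarrow> (1 / z) *\<^sub>R x \<in> J" if "0 < z" for x :: "real^'n" and z :: real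
    using that by (auto simp: image_iff intro: bexI[of _ "(1 / z) *\<^sub>R x"])
  then show ?thesis
    unfolding persp_relax_def perspective_region_def by (intro arg_cong[where f=closure]) auto
qed

end

theorem theorem1:
  fixes v :: "'n::finite option \<Rightarrow> real^'n"
    and f :: "real^'n \<Rightarrow> real"
  assumes simplex: "inj v" "\<not> affine_dependent (range v)"
    and orthant: "\<forall>x \<in> convex hull (range v). (\<forall>i. 0 \<le> x $ i) \<and> x \<noteq> 0"
    and cont: "continuous_on (convex hull (range v)) f"
    and conv: "convex_on (convex hull (range v)) f"
  shows "measure lebesgue (persp_relax v f) =
    1 / fact (CARD('n) + 2) * \<bar>det (vertex_matrix v)\<bar> * (\<Sum>j\<in>UNIV. f (v j))
    - 1 / real (CARD('n) + 2) * integral (convex hull (range v)) f"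
proof -
  interpret affine_simplex v
    using simplex by unfold_locales
  have "measure lebesgue (persp_relax v f)
      = integral J (affine_interp v f) / (real CARD('n) + 2) - integral J f / (real CARD('n) + 2)"
    unfolding persp_relax_eq_closure_perspective_region
    using compact_simplex cont continuous_on_affine_interp convex_le_affine_interp[OF conv]
    by (subst measure_closure_perspective_region) (auto simp: diff_divide_distrib)
  also have "integral J (affine_interp v f) / (real CARD('n) + 2)
      = 1 / fact (CARD('n) + 2) * \<bar>det (vertex_matrix v)\<bar> * (\<Sum>j\<in>UNIV. f (v j))"
  proof -
    have "fact (CARD('n) + 2) = (real CARD('n) + 2) * ((real CARD('n) + 1) * fact CARD('n))"
      by (simp add: numeral_2_eq_2 algebra_simps)
    then show ?thesis
      by (simp add: integral_affine_interp measure_simplex field_simps)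
  qed
  finally show ?thesis
    by simp
qed

end
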